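(* Let $M$ be a non-trivial finitely generated indecomposable $\langle t\rangle$-module. Then its graph $\Gamma_M$ is of type 1, type 2, or type 3.
   Context: $\langle t\rangle=\{0,1,t,t^2,\dots\}$ is the free commutative monoid with zero on one generator. A $\langle t\rangle$-module is a pointed set $(M,* )$ with an action of $\langle t\rangle$ such that $1m=m$, $a(bm)=(ab)m$, $0m=*$; it is finitely generated if there are $m_1,\dots,m_k$ with every element of the form $t^jm_i$ or $*$; it is non-trivial if $M\ne\{*\}$; it is indecomposable if it is not isomorphic to a wedge sum $M'\oplus M''$ (disjoint union with basepoints identified) of two non-trivial modules. The graph $\Gamma_M$ is the directed graph with vertex set $M\setminus\{*\}$ and an edge $m\to tm$ for every $m\in M\setminus\{*\}$ with $tm\ne *$; each vertex has at most one outgoing edge. A leaf is a vertex with no incoming edge, a root a vertex with no outgoing edge. $\Gamma_M$ is of type 1 if it is a rooted tree: its underlying undirected graph is a tree with a unique root, and from every vertex there is a unique directed path to the root. It is of type 2 if it is obtained from a (finite) rooted tree by joining its root by an edge to the initial vertex of the infinite directed ray $v_0\to v_1\to v_2\to\cdots$ (the graph $\Gamma_{\langle t\rangle}$). It is of type 3 if it is obtained from an oriented directed cycle by attaching rooted trees to vertices of the cycle (each tree's root having an outgoing edge into the cycle). *)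

theory Defs
  imports Main
begin

text \<open>Elements of the monoid <t> = {0,1,t,t^2,...}: None is 0, Some j is t^j.\<close>
type_synonym tmon = "nat option"

fun tmul :: "tmon \<Rightarrow> tmon \<Rightarrow> tmon" where
  "tmul (Some i) (Some j) = Some (i + j)"
| "tmul _ _ = None"

definition tmodule :: "'a set \<Rightarrow> 'a \<Rightarrow> (tmon \<Rightarrow> 'a \<Rightarrow> 'a) \<Rightarrow> bool" where
  "tmodule M base act \<longleftrightarrow>
     base \<in> M \<and>
     (\<forall>a. \<forall>m\<in>M. act a m \<in> M) \<and>
     (\<forall>m\<in>M. act (Some 0) m = m) \<and>
     (\<forall>a b. \<forall>m\<in>M. act a (act b m) = act (tmul a b) m) \<and>
     (\<forall>m\<in>M. act None m = base)"

definition fin_gen :: "'a set \<Rightarrow> 'a \<Rightarrow> (tmon \<Rightarrow> 'a \<Rightarrow> 'a) \<Rightarrow> bool" where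
  "fin_gen M base act \<longleftrightarrow>
     (\<exists>gs :: 'a list. set gs \<subseteq> M \<and>
        (\<forall>m\<in>M. m = base \<or> (\<exists>g\<in>set gs. \<exists>j. m = act (Some j) g)))"

definition nontrivial :: "'a set \<Rightarrow> 'a \<Rightarrow> bool" where
  "nontrivial M base \<longleftrightarrow> M \<noteq> {base}"

definition submodule :: "'a set \<Rightarrow> 'a set \<Rightarrow> 'a \<Rightarrow> (tmon \<Rightarrow> 'a \<Rightarrow> 'a) \<Rightarrow> bool" where
  "submodule N M base act \<longleftrightarrow> N \<subseteq> M \<and> base \<in> N \<and> (\<forall>a. \<forall>m\<in>N. act a m \<in> N)"

text \<open>M is (internally) the wedge sum of two non-trivial submodules.\<close>
definition decomposable :: "'a set \<Rightarrow> 'a \<Rightarrow> (tmon \<Rightarrow> 'a \<Rightarrow> 'a) \<Rightarrow> bool" where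
  "decomposable M base act \<longleftrightarrow>
     (\<exists>N1 N2. submodule N1 M base act \<and> submodule N2 M base act \<and>
        N1 \<union> N2 = M \<and> N1 \<inter> N2 = {base} \<and>
        nontrivial N1 base \<and> nontrivial N2 base)"

definition indecomposable :: "'a set \<Rightarrow> 'a \<Rightarrow> (tmon \<Rightarrow> 'a \<Rightarrow> 'a) \<Rightarrow> bool" where
  "indecomposable M base act \<longleftrightarrow> \<not> decomposable M base act"

text \<open>Undirected cycle in the underlying (multi)graph: distinct vertices v_0..v_(k-1), k \<ge> 1,
  and distinct edges e_i joining v_i and v_(i+1 mod k) (loops and 2-cycles included).\<close>
definition und_cycle :: "'a set \<Rightarrow> ('a \<times> 'a) set \<Rightarrow> 'a list \<Rightarrow> ('a \<times> 'a) list \<Rightarrow> bool" where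
  "und_cycle V E vs es \<longleftrightarrow>
     length vs \<ge> 1 \<and> length es = length vs \<and> distinct vs \<and> distinct es \<and> set vs \<subseteq> V \<and>
     (\<forall>i<length vs. es ! i \<in> E \<and>
        (es ! i = (vs ! i, vs ! ((i + 1) mod length vs)) \<or>
         es ! i = (vs ! ((i + 1) mod length vs), vs ! i)))"

definition und_connected :: "'a set \<Rightarrow> ('a \<times> 'a) set \<Rightarrow> bool" where
  "und_connected V E \<longleftrightarrow>
     (\<forall>u\<in>V. \<forall>v\<in>V. (\<lambda>x y. (x, y) \<in> E \<or> (y, x) \<in> E)\<^sup>*\<^sup>* u v)"

definition is_und_tree :: "'a set \<Rightarrow> ('a \<times> 'a) set \<Rightarrow> bool" where
  "is_und_tree V E \<longleftrightarrow> V \<noteq> {} \<and> und_connected V E \<and> \<not> (\<exists>vs es. und_cycle V E vs es)"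

definition is_root :: "'a set \<Rightarrow> ('a \<times> 'a) set \<Rightarrow> 'a \<Rightarrow> bool" where
  "is_root V E r \<longleftrightarrow> r \<in> V \<and> \<not> (\<exists>w. (r, w) \<in> E)"

definition dpath :: "'a set \<Rightarrow> ('a \<times> 'a) set \<Rightarrow> 'a list \<Rightarrow> 'a \<Rightarrow> 'a \<Rightarrow> bool" where
  "dpath V E p u v \<longleftrightarrow> p \<noteq> [] \<and> hd p = u \<and> last p = v \<and> distinct p \<and> set p \<subseteq> V \<and>
     (\<forall>i. Suc i < length p \<longrightarrow> (p ! i, p ! Suc i) \<in> E)"

definition rooted_tree :: "'a set \<Rightarrow> ('a \<times> 'a) set \<Rightarrow> 'a \<Rightarrow> bool" where
  "rooted_tree V E r \<longleftrightarrow>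
     E \<subseteq> V \<times> V \<and> is_und_tree V E \<and> is_root V E r \<and> (\<forall>r'. is_root V E r' \<longrightarrow> r' = r) \<and>
     (\<forall>v\<in>V. \<exists>!p. dpath V E p v r)"

definition induced :: "('a \<times> 'a) set \<Rightarrow> 'a set \<Rightarrow> ('a \<times> 'a) set" where
  "induced E S = E \<inter> (S \<times> S)"

definition gverts :: "'a set \<Rightarrow> 'a \<Rightarrow> 'a set" where
  "gverts M base = M - {base}"

definition gedges :: "'a set \<Rightarrow> 'a \<Rightarrow> (tmon \<Rightarrow> 'a \<Rightarrow> 'a) \<Rightarrow> ('a \<times> 'a) set" where
  "gedges M base act = {(m, act (Some 1) m) | m. m \<in> M - {base} \<and> act (Some 1) m \<noteq> base}"

definition graph_type1 :: "'a set \<Rightarrow> ('a \<times> 'a) set \<Rightarrow> bool" where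
  "graph_type1 V E \<longleftrightarrow> (\<exists>r. rooted_tree V E r)"

definition graph_type2 :: "'a set \<Rightarrow> ('a \<times> 'a) set \<Rightarrow> bool" where
  "graph_type2 V E \<longleftrightarrow>
     (\<exists>T rho (v :: nat \<Rightarrow> 'a).
        finite T \<and> rooted_tree T (induced E T) rho \<and>
        inj v \<and> T \<inter> range v = {} \<and> V = T \<union> range v \<and>
        E = induced E T \<union> {(rho, v 0)} \<union> range (\<lambda>n. (v n, v (Suc n))))"

definition graph_type3 :: "'a set \<Rightarrow> ('a \<times> 'a) set \<Rightarrow> bool" where
  "graph_type3 V E \<longleftrightarrow>
     (\<exists>cs Ts rt att.
        cs \<noteq> [] \<and> distinct cs \<and> set cs \<subseteq> V \<and>
        induced E (set cs) = {(cs ! i, cs ! ((i + 1) mod length cs)) | i. i < length cs} \<and>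
        (\<forall>T\<in>Ts. T \<noteq> {}) \<and>
        (\<forall>T1\<in>Ts. \<forall>T2\<in>Ts. T1 \<noteq> T2 \<longrightarrow> T1 \<inter> T2 = {}) \<and>
        \<Union>Ts = V - set cs \<and>
        (\<forall>T\<in>Ts. rooted_tree T (induced E T) (rt T) \<and> att T \<in> set cs) \<and>
        E = induced E (set cs) \<union> (\<Union>T\<in>Ts. induced E T \<union> {(rt T, att T)}))"

end

theory Submission
  imports Defs
begin

text \<open>Write \<open>f\<close> for the action of \<open>t\<close>; the graph is the functional graph of \<open>f\<close> on the
  elements other than the basepoint. Indecomposability forces any two orbits to meet away from
  the basepoint, since the elements whose orbit meets that of a fixed \<open>x\<close> split off as a
  wedge summand. If some element is sent to the basepoint, every element reaches it and the
  graph is a rooted tree. Otherwise \<open>f\<close> maps vertices to vertices. A periodic point spans a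
  cycle that attracts every orbit, and the remaining vertices form the trees hanging off the
  cycle. Without periodic points all orbits are injective; each of the finitely many generators
  joins the orbit of one fixed generator \<open>y\<close> below some common index \<open>B\<close>, so beyond
  \<open>f\<^sup>B y\<close> that orbit is an unbranched ray and the rest is a finite tree rooted at \<open>f\<^sup>B y\<close>.\<close>

lemma funpow_fixed: "f b = b \<Longrightarrow> (f ^^ n) b = b"
  by (induction n) auto

lemma funpow_closed: "(\<And>x. x \<in> A \<Longrightarrow> f x \<in> A) \<Longrightarrow> x \<in> A \<Longrightarrow> (f ^^ n) x \<in> A"
  by (induction n) auto

lemma funpow_shift:
  fixes f :: "'a \<Rightarrow> 'a"
  shows "(f ^^ a) x = (f ^^ b) y \<Longrightarrow> (f ^^ (k + a)) x = (f ^^ (k + b)) y"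
  by (simp only: funpow_add o_apply)

lemma funpow_shortcut:
  fixes f :: "'a \<Rightarrow> 'a"
  assumes "(f ^^ i) x = (f ^^ j) x" "i \<le> j" "j \<le> n"
  shows "(f ^^ (n - (j - i))) x = (f ^^ n) x"
proof -
  have "(f ^^ (n - j + i)) x = (f ^^ (n - j + j)) x"
    using funpow_shift[OF assms(1)] .
  with assms(2,3) show ?thesis
    by (simp add: Nat.diff_diff_right)
qed

lemma funpow_stays_in:
  assumes "\<And>c. c \<in> C \<Longrightarrow> f c \<in> C" "(f ^^ n) x \<in> C" "n \<le> m"
  shows "(f ^^ m) x \<in> C"
proof -
  have "(f ^^ (m - n + n)) x \<in> C"
    unfolding funpow_add o_apply using assms(1,2) by (rule funpow_closed)
  with assms(3) show ?thesis by simp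
qed

lemma funpow_exit_point:
  assumes "(f ^^ n) x \<in> C" "x \<notin> C"
  obtains m where "(f ^^ m) x \<notin> C" "f ((f ^^ m) x) \<in> C"
  using assms
proof (induction n arbitrary: thesis)
  case (Suc n)
  show ?case
  proof (cases "(f ^^ n) x \<in> C")
    case True
    with Suc.IH Suc.prems(1,3) show ?thesis by blast
  next
    case False
    with Suc.prems(1,2) show ?thesis by simp
  qed
qed simp

section \<open>Functional graphs and rooted trees\<close>

definition fgraph :: "'a set \<Rightarrow> ('a \<Rightarrow> 'a) \<Rightarrow> ('a \<times> 'a) set" where
  "fgraph V f = {(x, f x) | x. x \<in> V \<and> f x \<in> V}"

lemma fgraph_iff [simp]: "(x, y) \<in> fgraph V f \<longleftrightarrow> x \<in> V \<and> y = f x \<and> f x \<in> V"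
  unfolding fgraph_def by auto

lemma induced_fgraph: "T \<subseteq> V \<Longrightarrow> induced (fgraph V f) T = fgraph T f"
  unfolding induced_def by auto

lemma dpath_fgraph_nth:
  assumes "dpath V (fgraph V f) p x y" "i < length p"
  shows "p ! i = (f ^^ i) x"
  using assms(2)
proof (induction i)
  case 0
  with assms(1) show ?case by (auto simp: dpath_def hd_conv_nth[symmetric])
next
  case (Suc i)
  with assms(1) have "p ! Suc i = f (p ! i)" by (auto simp: dpath_def)
  with Suc show ?case by simp
qed

lemma dpath_und_reach:
  assumes "dpath V E p x y"
  shows "(\<lambda>u v. (u, v) \<in> E \<or> (v, u) \<in> E)\<^sup>*\<^sup>* x y"
proof -
  have "(\<lambda>u v. (u, v) \<in> E \<or> (v, u) \<in> E)\<^sup>*\<^sup>* x (p ! i)" if "i < length p" for i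
    using that
  proof (induction i)
    case 0
    with assms show ?case by (auto simp: dpath_def hd_conv_nth[symmetric])
  next
    case (Suc i)
    with assms have "(p ! i, p ! Suc i) \<in> E" by (simp add: dpath_def)
    with Suc show ?case by (simp add: rtranclp.rtrancl_into_rtrancl)
  qed
  moreover from assms have "y = p ! (length p - 1)"
    by (auto simp: dpath_def last_conv_nth)
  ultimately show ?thesis
    using assms by (simp add: dpath_def)
qed

text \<open>An undirected cycle has a vertex of maximal height; both cycle edges at that vertex
  must leave it, so they coincide with its unique outgoing edge.\<close>
lemma no_und_cycle_graded:
  assumes functional: "\<And>a b. (a, b) \<in> E \<Longrightarrow> b = f a"
    and graded: "\<And>a b. (a, b) \<in> E \<Longrightarrow> h a = Suc (h b)"
  shows "\<not> und_cycle V E vs es"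
proof
  assume cyc: "und_cycle V E vs es"
  define k where "k = length vs"
  from cyc have k: "k \<ge> 1" and "length es = k" "distinct es"
    and edge: "\<And>i. i < k \<Longrightarrow> es ! i \<in> E \<and>
      (es ! i = (vs ! i, vs ! ((i + 1) mod k)) \<or> es ! i = (vs ! ((i + 1) mod k), vs ! i))"
    unfolding und_cycle_def k_def by auto
  obtain i where i: "i < k" and top: "\<And>j. j < k \<Longrightarrow> h (vs ! j) \<le> h (vs ! i)"
  proof -
    have "finite (h ` set vs)" "h ` set vs \<noteq> {}" using k by (auto simp: k_def)
    from Max_in[OF this] obtain i where "i < k" "h (vs ! i) = Max (h ` set vs)"
      by (auto simp: k_def in_set_conv_nth)
    with that show ?thesis by (simp add: k_def)
  qed
  have no_incoming: False if "j < k" "(vs ! j, vs ! i) \<in> E" for j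
    using graded[OF that(2)] top[OF that(1)] by simp
  have "(i + 1) mod k < k" using k by simp
  with edge[OF i] no_incoming have ei: "es ! i = (vs ! i, f (vs ! i))"
    by (metis functional)
  have "k \<noteq> 1"
  proof
    assume "k = 1"
    with i ei have "(vs ! i, vs ! i) \<in> E" using edge[OF i] by auto
    with no_incoming[OF i] show False .
  qed
  define j where "j = (if i = 0 then k - 1 else i - 1)"
  have j: "j < k" "j \<noteq> i" "(j + 1) mod k = i"
    using i k \<open>k \<noteq> 1\<close> unfolding j_def by auto
  with edge[OF j(1)] no_incoming have ej: "es ! j = (vs ! i, f (vs ! i))"
    by (metis functional)
  with ei have "es ! i = es ! j" by simp
  with \<open>distinct es\<close> \<open>length es = k\<close> i j show False
    by (simp add: nth_eq_iff_index_eq)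
qed

locale reaching_root =
  fixes T :: "'a set" and f :: "'a \<Rightarrow> 'a" and r :: 'a
  assumes root_in: "r \<in> T"
    and root_leaves: "f r \<notin> T"
    and step_in: "\<And>x. x \<in> T \<Longrightarrow> x \<noteq> r \<Longrightarrow> f x \<in> T"
    and reaches_root: "\<And>x. x \<in> T \<Longrightarrow> \<exists>n. (f ^^ n) x = r"
begin

definition depth :: "'a \<Rightarrow> nat" where
  "depth x = (LEAST n. (f ^^ n) x = r)"

lemma funpow_depth: "x \<in> T \<Longrightarrow> (f ^^ depth x) x = r"
  unfolding depth_def by (rule LeastI_ex) (rule reaches_root)

lemma depth_le: "(f ^^ n) x = r \<Longrightarrow> depth x \<le> n"
  unfolding depth_def by (rule Least_le)

lemma funpow_before_root:
  assumes "x \<in> T"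
  shows "i < depth x \<Longrightarrow> (f ^^ i) x \<in> T \<and> (f ^^ i) x \<noteq> r"
proof (induction i)
  case 0
  with assms depth_le[of 0 x] show ?case by auto
next
  case (Suc i)
  then have "(f ^^ Suc i) x \<in> T" using step_in by simp
  moreover have "(f ^^ Suc i) x \<noteq> r" using depth_le[of "Suc i" x] Suc.prems by auto
  ultimately show ?case ..
qed

lemma fgraph_edge_iff: "(a, b) \<in> fgraph T f \<longleftrightarrow> a \<in> T \<and> a \<noteq> r \<and> b = f a"
  using root_leaves step_in by auto

lemma depth_edge:
  assumes "(a, b) \<in> fgraph T f"
  shows "depth a = Suc (depth b)"
proof -
  from assms have a: "a \<in> T" "a \<noteq> r" and b: "b = f a" "b \<in> T"
    unfolding fgraph_edge_iff using step_in by auto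
  have "depth a \<noteq> 0"
  proof
    assume "depth a = 0"
    with funpow_depth[OF a(1)] a(2) show False by simp
  qed
  then have "(f ^^ Suc (depth a - 1)) a = r" using funpow_depth[OF a(1)] by simp
  then have "(f ^^ (depth a - 1)) b = r" unfolding b(1) funpow_Suc_right o_apply .
  then have "depth b \<le> depth a - 1" by (rule depth_le)
  moreover have "depth a \<le> Suc (depth b)"
    using funpow_depth[OF b(2)] b(1) by (intro depth_le) (simp only: funpow_Suc_right o_apply)
  ultimately show ?thesis using \<open>depth a \<noteq> 0\<close> by linarith
qed

definition root_path :: "'a \<Rightarrow> 'a list" where
  "root_path x = map (\<lambda>i. (f ^^ i) x) [0..<Suc (depth x)]"

text \<open>Two equal points before the root would shortcut the way to the root below its depth.\<close>
lemma distinct_root_path: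
  assumes "x \<in> T"
  shows "distinct (root_path x)"
proof -
  have no_repeat: False if "i < j" "j \<le> depth x" "(f ^^ i) x = (f ^^ j) x" for i j
  proof -
    have "(f ^^ (depth x - (j - i))) x = r"
      using funpow_shortcut[OF that(3)] that(1,2) funpow_depth[OF assms] by simp
    then have "depth x \<le> depth x - (j - i)" by (rule depth_le)
    with that show False by linarith
  qed
  have "inj_on (\<lambda>i. (f ^^ i) x) {0..<Suc (depth x)}"
  proof (rule inj_onI)
    fix i j assume "i \<in> {0..<Suc (depth x)}" "j \<in> {0..<Suc (depth x)}" "(f ^^ i) x = (f ^^ j) x"
    then show "i = j"
      using no_repeat[of i j] no_repeat[of j i] by (cases i j rule: linorder_cases) auto
  qed
  then show ?thesis by (simp add: root_path_def distinct_map del: upt_Suc)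
qed

lemma dpath_root_path:
  assumes "x \<in> T"
  shows "dpath T (fgraph T f) (root_path x) x r"
proof -
  have nth: "root_path x ! i = (f ^^ i) x" if "i \<le> depth x" for i
    using that by (simp add: root_path_def nth_map_upt del: upt_Suc)
  have inT: "(f ^^ i) x \<in> T" if "i \<le> depth x" for i
    using that funpow_before_root[OF assms] funpow_depth[OF assms] root_in
    by (cases "i = depth x") auto
  have "(root_path x ! i, root_path x ! Suc i) \<in> fgraph T f"
    if "Suc i < length (root_path x)" for i
    using that funpow_before_root[OF assms, of i] nth[of i] nth[of "Suc i"] step_in
    by (simp add: root_path_def fgraph_edge_iff del: upt_Suc)
  moreover have "set (root_path x) \<subseteq> T"
    using inT by (auto simp: root_path_def simp del: upt_Suc)
  moreover have "hd (root_path x) = x" "last (root_path x) = r"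
    using funpow_depth[OF assms] by (simp_all add: root_path_def hd_map last_map del: upt_Suc)
  ultimately show ?thesis
    using distinct_root_path[OF assms] unfolding dpath_def by (simp add: root_path_def del: upt_Suc)
qed

lemma dpath_to_root_unique:
  assumes "x \<in> T" "dpath T (fgraph T f) p x r"
  shows "p = root_path x"
proof -
  define L where "L = length p - 1"
  have nth: "\<And>i. i < length p \<Longrightarrow> p ! i = (f ^^ i) x"
    using assms(2) by (rule dpath_fgraph_nth)
  from assms(2) have "p \<noteq> []" "distinct p" "p ! L = r"
    by (auto simp: dpath_def L_def last_conv_nth)
  then have L: "L < length p" "(f ^^ L) x = r" using nth by (auto simp: L_def)
  then have "depth x \<le> L" using depth_le by blast
  moreover have "\<not> depth x < L"
  proof
    assume "depth x < L"
    then have "p ! depth x = p ! L" using nth L funpow_depth[OF assms(1)] by simp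
    with \<open>distinct p\<close> L \<open>depth x < L\<close> show False by (simp add: nth_eq_iff_index_eq)
  qed
  ultimately have "length p = Suc (depth x)" using L(1) unfolding L_def by linarith
  then show ?thesis
    by (intro nth_equalityI) (simp_all add: root_path_def nth del: upt_Suc)
qed

lemma rooted_tree: "rooted_tree T (fgraph T f) r"
proof -
  have "und_connected T (fgraph T f)"
    unfolding und_connected_def
  proof (intro ballI)
    fix u v assume "u \<in> T" "v \<in> T"
    let ?R = "\<lambda>a b. (a, b) \<in> fgraph T f \<or> (b, a) \<in> fgraph T f"
    have "?R\<^sup>*\<^sup>* u r" using dpath_root_path[OF \<open>u \<in> T\<close>] by (rule dpath_und_reach)
    moreover have "?R\<^sup>*\<^sup>* v r" using dpath_root_path[OF \<open>v \<in> T\<close>] by (rule dpath_und_reach)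
    moreover have "symp ?R\<^sup>*\<^sup>*" by (intro symp_rtranclp) (auto intro: sympI)
    ultimately show "?R\<^sup>*\<^sup>* u v" by (blast intro: rtranclp_trans dest: sympD)
  qed
  moreover have "\<not> und_cycle T (fgraph T f) vs es" for vs es
    by (rule no_und_cycle_graded[where h = depth]) (simp, erule depth_edge)
  ultimately have "is_und_tree T (fgraph T f)"
    unfolding is_und_tree_def using root_in by blast
  moreover have "is_root T (fgraph T f) r' \<longleftrightarrow> r' = r" for r'
    using root_in step_in unfolding is_root_def fgraph_edge_iff by blast
  moreover have "\<exists>!p. dpath T (fgraph T f) p v r" if "v \<in> T" for v
    using dpath_root_path dpath_to_root_unique that by blast
  ultimately show ?thesis
    unfolding rooted_tree_def by auto
qed

end

section \<open>A cycle with trees attached\<close>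

lemma periodic_orbit_list:
  fixes f :: "'a \<Rightarrow> 'a"
  assumes "(f ^^ p) x = x" "0 < p"
  obtains cs where "cs \<noteq> []" "distinct cs" "set cs = range (\<lambda>n. (f ^^ n) x)"
    "\<And>i. i < length cs \<Longrightarrow> f (cs ! i) = cs ! (Suc i mod length cs)"
proof -
  define q where "q = (LEAST q. 0 < q \<and> (f ^^ q) x = x)"
  have q: "0 < q" "(f ^^ q) x = x"
    unfolding q_def using LeastI_ex[of "\<lambda>q. 0 < q \<and> (f ^^ q) x = x"] assms by blast+
  have q_least: "q \<le> m" if "0 < m" "(f ^^ m) x = x" for m
    unfolding q_def using that by (intro Least_le) simp
  have mod_q: "(f ^^ n) x = (f ^^ (n mod q)) x" for n
  proof -
    have "(f ^^ n) x = (f ^^ (n mod q + q * (n div q))) x" by simp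
    also have "\<dots> = (f ^^ (n mod q)) (((f ^^ q) ^^ (n div q)) x)"
      by (simp only: funpow_add funpow_mult o_apply)
    also have "((f ^^ q) ^^ (n div q)) x = x" using q(2) by (rule funpow_fixed)
    finally show ?thesis .
  qed
  define cs where "cs = map (\<lambda>i. (f ^^ i) x) [0..<q]"
  have no_repeat: False if "i < j" "j < q" "(f ^^ i) x = (f ^^ j) x" for i j
  proof -
    have "(f ^^ (q - (j - i))) x = x"
      using funpow_shortcut[OF that(3)] that(1,2) q(2) by simp
    with q_least[of "q - (j - i)"] that show False by linarith
  qed
  have "inj_on (\<lambda>i. (f ^^ i) x) {0..<q}"
  proof (rule inj_onI)
    fix i j assume "i \<in> {0..<q}" "j \<in> {0..<q}" "(f ^^ i) x = (f ^^ j) x"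
    then show "i = j"
      using no_repeat[of i j] no_repeat[of j i] by (cases i j rule: linorder_cases) auto
  qed
  then have "distinct cs" by (simp add: cs_def distinct_map)
  moreover have "cs \<noteq> []" using q(1) by (simp add: cs_def)
  moreover have "set cs = range (\<lambda>n. (f ^^ n) x)"
  proof
    show "range (\<lambda>n. (f ^^ n) x) \<subseteq> set cs"
    proof
      fix y assume "y \<in> range (\<lambda>n. (f ^^ n) x)"
      then obtain n where "y = (f ^^ (n mod q)) x" using mod_q by auto
      moreover have "n mod q < q" using q(1) by simp
      ultimately show "y \<in> set cs" by (auto simp: cs_def)
    qed
  qed (auto simp: cs_def)
  moreover have "f (cs ! i) = cs ! (Suc i mod length cs)" if "i < length cs" for i
    using that mod_q[of "Suc i"] q(1) by (simp add: cs_def)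
  ultimately show ?thesis using that by blast
qed

locale attracting_cycle =
  fixes V :: "'a set" and f :: "'a \<Rightarrow> 'a" and cs :: "'a list"
  assumes maps_to: "\<And>x. x \<in> V \<Longrightarrow> f x \<in> V"
    and cycle_nonempty: "cs \<noteq> []" and cycle_distinct: "distinct cs" and cycle_in: "set cs \<subseteq> V"
    and cycle_succ: "\<And>i. i < length cs \<Longrightarrow> f (cs ! i) = cs ! (Suc i mod length cs)"
    and attracted: "\<And>x. x \<in> V \<Longrightarrow> \<exists>n. (f ^^ n) x \<in> set cs"
begin

lemma cycle_closed: "c \<in> set cs \<Longrightarrow> f c \<in> set cs"
proof -
  assume "c \<in> set cs"
  then obtain i where "i < length cs" "c = cs ! i" by (auto simp: in_set_conv_nth)
  with cycle_nonempty show ?thesis by (simp add: cycle_succ)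
qed

lemma funpow_stays_in_cycle: "(f ^^ n) y \<in> set cs \<Longrightarrow> n \<le> m \<Longrightarrow> (f ^^ m) y \<in> set cs"
  by (rule funpow_stays_in[where C = "set cs"]) (auto intro: cycle_closed)

lemma induced_cycle:
  "induced (fgraph V f) (set cs) = {(cs ! i, cs ! ((i + 1) mod length cs)) | i. i < length cs}"
proof -
  have "induced (fgraph V f) (set cs) = {(c, f c) | c. c \<in> set cs}"
    using cycle_in cycle_closed by (auto simp: induced_def subset_iff)
  also have "\<dots> = {(cs ! i, cs ! ((i + 1) mod length cs)) | i. i < length cs}"
    using cycle_succ by (force simp: in_set_conv_nth)
  finally show ?thesis .
qed

definition gate :: "'a \<Rightarrow> bool" where
  "gate r \<longleftrightarrow> r \<in> V - set cs \<and> f r \<in> set cs"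

definition tree :: "'a \<Rightarrow> 'a set" where
  "tree r = {y \<in> V - set cs. \<exists>n. (f ^^ n) y = r}"

lemma gate_in_tree: "gate r \<Longrightarrow> r \<in> tree r"
  by (auto simp: tree_def gate_def intro!: exI[where x = 0])

text \<open>A gate is the last point before the cycle, so a point meets at most one gate.\<close>
lemma gate_unique:
  assumes "gate r" "gate r'" "(f ^^ n) y = r" "(f ^^ m) y = r'"
  shows "r = r'"
proof -
  have "(f ^^ Suc n) y \<in> set cs" "(f ^^ Suc m) y \<in> set cs"
    using assms by (simp_all add: gate_def)
  then have "\<not> Suc n \<le> m" "\<not> Suc m \<le> n"
    using assms funpow_stays_in_cycle unfolding gate_def by blast+
  then have "n = m" by linarith
  with assms show ?thesis by simp
qed

lemma tree_step: "gate r \<Longrightarrow> x \<in> tree r \<Longrightarrow> x \<noteq> r \<Longrightarrow> f x \<in> tree r"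
proof -
  assume "gate r" "x \<in> tree r" "x \<noteq> r"
  then obtain n where x: "x \<in> V - set cs" and "(f ^^ n) x = r"
    unfolding tree_def by blast
  with \<open>x \<noteq> r\<close> obtain k where "n = Suc k" by (cases n) auto
  with \<open>(f ^^ n) x = r\<close> have n: "(f ^^ Suc k) x = r" by simp
  then have "(f ^^ k) (f x) = r" by (simp only: funpow_Suc_right o_apply)
  moreover have "f x \<notin> set cs"
    using funpow_stays_in_cycle[of 1 x "Suc k"] n \<open>gate r\<close> by (auto simp: gate_def)
  ultimately show ?thesis using x maps_to unfolding tree_def by auto
qed

lemma in_some_tree: "x \<in> V - set cs \<Longrightarrow> \<exists>r. gate r \<and> x \<in> tree r"
proof -
  assume x: "x \<in> V - set cs"
  obtain n where n: "(f ^^ n) x \<in> set cs" using attracted x by blast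
  from x have "x \<notin> set cs" by simp
  with n obtain m where m: "(f ^^ m) x \<notin> set cs" "f ((f ^^ m) x) \<in> set cs"
    by (rule funpow_exit_point)
  have "(f ^^ m) x \<in> V" using x by (simp add: funpow_closed maps_to)
  with m have "gate ((f ^^ m) x)" by (simp add: gate_def)
  moreover have "x \<in> tree ((f ^^ m) x)" using x by (auto simp: tree_def)
  ultimately show ?thesis by blast
qed

lemma rooted_tree_tree: "gate r \<Longrightarrow> rooted_tree (tree r) (induced (fgraph V f) (tree r)) r"
proof -
  assume "gate r"
  then have "reaching_root (tree r) f r"
  proof unfold_locales
    show "r \<in> tree r" using \<open>gate r\<close> by (rule gate_in_tree)
    show "f r \<notin> tree r" using \<open>gate r\<close> by (simp add: tree_def gate_def)
    show "f x \<in> tree r" if "x \<in> tree r" "x \<noteq> r" for x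
      using tree_step \<open>gate r\<close> that .
    show "\<exists>n. (f ^^ n) x = r" if "x \<in> tree r" for x
      using that by (simp add: tree_def)
  qed
  then have "rooted_tree (tree r) (fgraph (tree r) f) r" by (rule reaching_root.rooted_tree)
  moreover have "tree r \<subseteq> V" by (auto simp: tree_def)
  ultimately show ?thesis by (simp add: induced_fgraph)
qed

lemma trees_disjoint: "gate r \<Longrightarrow> gate r' \<Longrightarrow> y \<in> tree r \<Longrightarrow> y \<in> tree r' \<Longrightarrow> r = r'"
  unfolding tree_def using gate_unique by blast

definition tree_root :: "'a set \<Rightarrow> 'a" where
  "tree_root T = (THE r. gate r \<and> r \<in> T)"

lemma tree_root_tree: "gate r \<Longrightarrow> tree_root (tree r) = r"
  unfolding tree_root_def
  by (rule the_equality) (use gate_in_tree trees_disjoint in blast)+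

lemma fgraph_decomposition:
  "fgraph V f = induced (fgraph V f) (set cs) \<union>
     (\<Union>T\<in>tree ` Collect gate. induced (fgraph V f) T \<union> {(tree_root T, f (tree_root T))})"
    (is "_ = ?C \<union> ?Ts")
proof
  show "fgraph V f \<subseteq> ?C \<union> ?Ts"
  proof
    fix e assume "e \<in> fgraph V f"
    then obtain x where e: "e = (x, f x)" "x \<in> V" "f x \<in> V" by (cases e) auto
    show "e \<in> ?C \<union> ?Ts"
    proof (cases "x \<in> set cs")
      case True
      with e show ?thesis by (simp add: induced_def cycle_closed)
    next
      case False
      with e obtain r where r: "gate r" "x \<in> tree r" using in_some_tree by blast
      show ?thesis
      proof (cases "x = r")
        case True
        with e r show ?thesis by (auto simp: tree_root_tree)
      next
        case False
        with r tree_step have "f x \<in> tree r" by blast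
        with e r show ?thesis by (auto simp: induced_def)
      qed
    qed
  qed
  show "?C \<union> ?Ts \<subseteq> fgraph V f"
    using cycle_in by (auto simp: induced_def tree_root_tree gate_def)
qed

lemma graph_type3: "graph_type3 V (fgraph V f)"
  unfolding graph_type3_def
proof (intro exI conjI ballI impI)
  let ?Ts = "tree ` Collect gate"
  show "cs \<noteq> []" "distinct cs" "set cs \<subseteq> V"
    by (fact cycle_nonempty cycle_distinct cycle_in)+
  show "induced (fgraph V f) (set cs) = {(cs ! i, cs ! ((i + 1) mod length cs)) | i. i < length cs}"
    by (fact induced_cycle)
  show "T \<noteq> {}" if "T \<in> ?Ts" for T
    using that gate_in_tree by blast
  show "T1 \<inter> T2 = {}" if "T1 \<in> ?Ts" "T2 \<in> ?Ts" "T1 \<noteq> T2" for T1 T2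
    using that trees_disjoint by blast
  show "\<Union> ?Ts = V - set cs"
    using in_some_tree by (auto simp: tree_def)
  show "rooted_tree T (induced (fgraph V f) T) (tree_root T)" if "T \<in> ?Ts" for T
    using that rooted_tree_tree tree_root_tree by auto
  show "f (tree_root T) \<in> set cs" if "T \<in> ?Ts" for T
    using that tree_root_tree by (auto simp: gate_def)
  show "fgraph V f = induced (fgraph V f) (set cs) \<union>
     (\<Union>T\<in>?Ts. induced (fgraph V f) T \<union> {(tree_root T, f (tree_root T))})"
    by (fact fgraph_decomposition)
qed

end

lemma graph_type3_fgraph:
  assumes maps_to: "\<And>x. x \<in> V \<Longrightarrow> f x \<in> V"
    and meet: "\<And>x y. x \<in> V \<Longrightarrow> y \<in> V \<Longrightarrow> \<exists>i j. (f ^^ i) x = (f ^^ j) y"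
    and periodic: "x \<in> V" "(f ^^ p) x = x" "0 < p"
  shows "graph_type3 V (fgraph V f)"
proof -
  obtain cs where cs: "cs \<noteq> []" "distinct cs" "set cs = range (\<lambda>n. (f ^^ n) x)"
    "\<And>i. i < length cs \<Longrightarrow> f (cs ! i) = cs ! (Suc i mod length cs)"
    using periodic_orbit_list[OF periodic(2,3)] by blast
  have "attracting_cycle V f cs"
  proof
    show "set cs \<subseteq> V" using cs(3) periodic(1) by (auto simp: funpow_closed maps_to)
    show "\<exists>n. (f ^^ n) z \<in> set cs" if "z \<in> V" for z
      using meet[OF that periodic(1)] cs(3) by auto
  qed (use maps_to cs in auto)
  then show ?thesis by (rule attracting_cycle.graph_type3)
qed

section \<open>A ray with a finite tree attached\<close>

lemma inj_orbit_if_aperiodic: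
  assumes maps_to: "\<And>x. x \<in> V \<Longrightarrow> f x \<in> V"
    and aperiodic: "\<And>x n. x \<in> V \<Longrightarrow> 0 < n \<Longrightarrow> (f ^^ n) x \<noteq> x"
    and "y \<in> V"
  shows "inj (\<lambda>n. (f ^^ n) y)"
proof -
  have no_repeat: False if "i < j" "(f ^^ i) y = (f ^^ j) y" for i j
  proof -
    have "(f ^^ (j - i)) ((f ^^ i) y) = (f ^^ (j - i + i)) y" by (simp only: funpow_add o_apply)
    also have "\<dots> = (f ^^ i) y" using that by simp
    finally have "(f ^^ (j - i)) ((f ^^ i) y) = (f ^^ i) y" .
    moreover have "(f ^^ i) y \<in> V" using \<open>y \<in> V\<close> by (simp add: funpow_closed maps_to)
    ultimately show False using aperiodic that(1) by simp
  qed
  show ?thesis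
  proof (rule injI)
    fix i j assume "(f ^^ i) y = (f ^^ j) y"
    then show "i = j"
      using no_repeat[of i j] no_repeat[of j i] by (cases i j rule: linorder_cases) auto
  qed
qed

lemma orbit_index_eq:
  fixes f :: "'a \<Rightarrow> 'a"
  assumes inj: "inj (\<lambda>n. (f ^^ n) y)"
    and "(f ^^ i) x = (f ^^ m) y" "(f ^^ i') x = (f ^^ m') y"
  shows "m + i' = m' + i"
proof -
  have *: "m + i' = m' + i"
    if "i \<le> i'" "(f ^^ i) x = (f ^^ m) y" "(f ^^ i') x = (f ^^ m') y" for i i' m m'
  proof -
    have "(f ^^ (i' - i + m)) y = (f ^^ m') y"
      using funpow_shift[OF that(2), of "i' - i"] that(1,3) by simp
    then have "i' - i + m = m'" by (rule injD[OF inj])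
    with that(1) show ?thesis by simp
  qed
  show ?thesis
    using *[OF _ assms(2,3)] *[OF _ assms(3,2)] by (cases "i \<le> i'") auto
qed

text \<open>Since every generator joins the orbit of \<open>y\<close> by index \<open>B\<close>, that orbit has no side
  branches beyond \<open>f\<^sup>B y\<close>, and only finitely many vertices lie off the ray.\<close>
locale ray_fgraph =
  fixes V :: "'a set" and f :: "'a \<Rightarrow> 'a" and G :: "'a set" and y :: 'a
    and a b :: "'a \<Rightarrow> nat" and B :: nat
  assumes maps_to: "\<And>x. x \<in> V \<Longrightarrow> f x \<in> V"
    and y_in: "y \<in> V" and inj_orbit: "inj (\<lambda>n. (f ^^ n) y)"
    and finite_generators: "finite G"
    and generated: "\<And>x. x \<in> V \<Longrightarrow> \<exists>g\<in>G. \<exists>j. x = (f ^^ j) g"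
    and joins: "\<And>g. g \<in> G \<Longrightarrow> (f ^^ a g) g = (f ^^ b g) y"
    and joins_below: "\<And>g. g \<in> G \<Longrightarrow> b g \<le> B"
begin

definition ray :: "nat \<Rightarrow> 'a" where
  "ray n = (f ^^ Suc (B + n)) y"

definition apex :: 'a where
  "apex = (f ^^ B) y"

definition stem :: "'a set" where
  "stem = V - range ray"

lemma ray_in: "ray n \<in> V"
  unfolding ray_def using y_in by (simp add: funpow_closed maps_to)

lemma inj_ray: "inj ray"
proof (rule injI)
  fix m n assume "ray m = ray n"
  then have "Suc (B + m) = Suc (B + n)" unfolding ray_def by (rule injD[OF inj_orbit])
  then show "m = n" by simp
qed

lemma funpow_in_ray: "B < n \<Longrightarrow> (f ^^ n) y \<in> range ray"
  unfolding ray_def by (rule range_eqI[of _ _ "n - Suc B"]) simp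

lemma generator_funpow: "g \<in> G \<Longrightarrow> a g \<le> j \<Longrightarrow> (f ^^ j) g = (f ^^ (j - a g + b g)) y"
  using funpow_shift[OF joins, of g "j - a g"] by simp

lemma ray_preimage:
  assumes "x \<in> V" "f x = (f ^^ Suc m) y" "B \<le> m"
  shows "x = (f ^^ m) y"
proof -
  obtain g j where g: "g \<in> G" "x = (f ^^ j) g" using generated[OF assms(1)] by blast
  have "(f ^^ Suc j) g = (f ^^ Suc m) y" using assms(2) g(2) by simp
  with joins[OF g(1)] have "b g + Suc j = Suc m + a g"
    by (rule orbit_index_eq[OF inj_orbit])
  with joins_below[OF g(1)] assms(3) have "a g \<le> j" "j - a g + b g = m" by linarith+
  with g show ?thesis by (simp add: generator_funpow)
qed

lemma stem_index_bound:
  assumes "g \<in> G" "(f ^^ j) g \<in> stem"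
  shows "j \<le> a g + (B - b g)"
proof (rule ccontr)
  assume "\<not> ?thesis"
  then have "(f ^^ j) g = (f ^^ (j - a g + b g)) y" "B < j - a g + b g"
    using generator_funpow[OF assms(1)] by auto
  with assms(2) funpow_in_ray show False by (simp add: stem_def)
qed

lemma finite_stem: "finite stem"
proof (rule finite_subset)
  show "stem \<subseteq> (\<Union>g\<in>G. (\<lambda>j. (f ^^ j) g) ` {..a g + (B - b g)})"
  proof
    fix x assume x: "x \<in> stem"
    then have "x \<in> V" by (simp add: stem_def)
    then obtain g j where "g \<in> G" "x = (f ^^ j) g" using generated by blast
    with x stem_index_bound show "x \<in> (\<Union>g\<in>G. (\<lambda>j. (f ^^ j) g) ` {..a g + (B - b g)})" by blast
  qed
qed (simp add: finite_generators)

lemma stem_reaches_apex: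
  assumes "x \<in> stem"
  shows "\<exists>n. (f ^^ n) x = apex"
proof -
  have "x \<in> V" using assms by (simp add: stem_def)
  then obtain g j where g: "g \<in> G" "x = (f ^^ j) g" using generated by blast
  with assms have j: "j \<le> a g + (B - b g)" by (simp add: stem_index_bound)
  define N where "N = a g + (B - b g)"
  have "(f ^^ (N - j)) x = (f ^^ (N - j + j)) g"
    using g(2) by (simp only: funpow_add o_apply)
  also have "\<dots> = (f ^^ N) g" using j by (simp add: N_def)
  also have "\<dots> = apex"
    using generator_funpow[OF g(1), of N] joins_below[OF g(1)] by (simp add: N_def apex_def)
  finally show ?thesis ..
qed

lemma apex_in_stem: "apex \<in> stem"
proof -
  have "apex \<noteq> ray n" for n
  proof
    assume "apex = ray n"
    then have "B = Suc (B + n)" unfolding apex_def ray_def by (rule injD[OF inj_orbit])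
    then show False by simp
  qed
  moreover have "apex \<in> V" using y_in by (simp add: apex_def funpow_closed maps_to)
  ultimately show ?thesis by (auto simp: stem_def)
qed

lemma stem_step:
  assumes "x \<in> stem" "x \<noteq> apex"
  shows "f x \<in> stem"
proof (rule ccontr)
  assume "f x \<notin> stem"
  have "x \<in> V" using assms(1) by (simp add: stem_def)
  with \<open>f x \<notin> stem\<close> have "f x \<in> range ray" by (simp add: stem_def maps_to)
  then obtain n where "f x = (f ^^ Suc (B + n)) y" by (auto simp: ray_def)
  with \<open>x \<in> V\<close> have x: "x = (f ^^ (B + n)) y" by (rule ray_preimage) simp
  show False
  proof (cases n)
    case 0
    with x assms(2) show False by (simp add: apex_def)
  next
    case (Suc k)
    with x have "x = ray k" by (simp add: ray_def)
    with assms(1) show False by (simp add: stem_def)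
  qed
qed

lemma fgraph_decomposition:
  "fgraph V f = induced (fgraph V f) stem \<union> {(apex, ray 0)} \<union> range (\<lambda>n. (ray n, ray (Suc n)))"
    (is "_ = ?S")
proof
  show "fgraph V f \<subseteq> ?S"
  proof
    fix e assume "e \<in> fgraph V f"
    then obtain x where e: "e = (x, f x)" "x \<in> V" by (cases e) auto
    show "e \<in> ?S"
    proof (cases "x \<in> stem")
      case True
      then show ?thesis
        using e stem_step[OF True] by (cases "x = apex") (auto simp: induced_def apex_def ray_def maps_to)
    next
      case False
      with e obtain n where "x = ray n" by (auto simp: stem_def)
      with e show ?thesis by (auto simp: ray_def)
    qed
  qed
  show "?S \<subseteq> fgraph V f"
    using apex_in_stem ray_in by (auto simp: induced_def stem_def apex_def ray_def maps_to)
qed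

lemma graph_type2: "graph_type2 V (fgraph V f)"
  unfolding graph_type2_def
proof (intro exI conjI)
  have "reaching_root stem f apex"
  proof
    have "f apex = ray 0" by (simp add: apex_def ray_def)
    then show "f apex \<notin> stem" by (simp add: stem_def)
  qed (use apex_in_stem stem_step stem_reaches_apex in auto)
  then have "rooted_tree stem (fgraph stem f) apex" by (rule reaching_root.rooted_tree)
  then show "rooted_tree stem (induced (fgraph V f) stem) apex"
    by (simp add: induced_fgraph stem_def)
  show "V = stem \<union> range ray" using ray_in by (auto simp: stem_def)
qed (use finite_stem inj_ray fgraph_decomposition in \<open>auto simp: stem_def\<close>)

end

lemma graph_type2_fgraph:
  assumes maps_to: "\<And>x. x \<in> V \<Longrightarrow> f x \<in> V"
    and meet: "\<And>x y. x \<in> V \<Longrightarrow> y \<in> V \<Longrightarrow> \<exists>i j. (f ^^ i) x = (f ^^ j) y"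
    and aperiodic: "\<And>x n. x \<in> V \<Longrightarrow> 0 < n \<Longrightarrow> (f ^^ n) x \<noteq> x"
    and G: "finite G" "G \<subseteq> V" "\<And>x. x \<in> V \<Longrightarrow> \<exists>g\<in>G. \<exists>j. x = (f ^^ j) g"
    and "V \<noteq> {}"
  shows "graph_type2 V (fgraph V f)"
proof -
  obtain y where y: "y \<in> G" using G(3) \<open>V \<noteq> {}\<close> by blast
  have "\<forall>g\<in>G. \<exists>i j. (f ^^ i) g = (f ^^ j) y" using meet G(2) y by blast
  then obtain a where "\<forall>g\<in>G. \<exists>j. (f ^^ a g) g = (f ^^ j) y" by (metis bchoice)
  then obtain b where ab: "\<forall>g\<in>G. (f ^^ a g) g = (f ^^ b g) y" by (metis bchoice)
  have "ray_fgraph V f G y a b (Max (b ` G))"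
  proof
    show y_in: "y \<in> V" using y G(2) by blast
    show "inj (\<lambda>n. (f ^^ n) y)"
      using maps_to aperiodic y_in by (rule inj_orbit_if_aperiodic)
    show "b g \<le> Max (b ` G)" if "g \<in> G" for g using that G(1) by simp
  qed (use maps_to G ab in auto)
  then show ?thesis by (rule ray_fgraph.graph_type2)
qed

section \<open>Pointed endomaps with meeting orbits\<close>

definition orbits_meet :: "('a \<Rightarrow> 'a) \<Rightarrow> 'a \<Rightarrow> 'a \<Rightarrow> 'a \<Rightarrow> bool" where
  "orbits_meet f base x y \<longleftrightarrow> (\<exists>i j. (f ^^ i) x = (f ^^ j) y \<and> (f ^^ i) x \<noteq> base)"

lemma orbits_meet_funpow_iff:
  assumes "(f ^^ j) m \<noteq> base"
  shows "orbits_meet f base x ((f ^^ j) m) \<longleftrightarrow> orbits_meet f base x m"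
proof
  assume "orbits_meet f base x ((f ^^ j) m)"
  then obtain i k where "(f ^^ i) x = (f ^^ (k + j)) m" "(f ^^ i) x \<noteq> base"
    unfolding orbits_meet_def by (auto simp: funpow_add)
  then show "orbits_meet f base x m" unfolding orbits_meet_def by blast
next
  assume "orbits_meet f base x m"
  then obtain i k where meet: "(f ^^ i) x = (f ^^ k) m" "(f ^^ i) x \<noteq> base"
    unfolding orbits_meet_def by blast
  show "orbits_meet f base x ((f ^^ j) m)"
  proof (cases "j \<le> k")
    case True
    with meet have "(f ^^ i) x = (f ^^ (k - j)) ((f ^^ j) m)"
      by (simp flip: funpow_add o_apply[of "f ^^ (k - j)" "f ^^ j"])
    with meet(2) show ?thesis unfolding orbits_meet_def by blast
  next
    case False
    with funpow_shift[OF meet(1), of "j - k"] have "(f ^^ (j - k + i)) x = (f ^^ j) m"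
      by simp
    with assms show ?thesis
      unfolding orbits_meet_def by (intro exI[of _ "j - k + i"] exI[of _ 0]) simp
  qed
qed

lemma graph_type1_fgraph:
  assumes closed: "\<And>x. x \<in> M \<Longrightarrow> f x \<in> M" and fixed: "f base = base"
    and root: "r \<in> M - {base}" "f r = base"
    and meets_root: "\<And>x. x \<in> M - {base} \<Longrightarrow> orbits_meet f base x r"
  shows "graph_type1 (M - {base}) (fgraph (M - {base}) f)"
proof -
  have reach: "\<exists>n. (f ^^ n) x = r" if x: "x \<in> M - {base}" for x
  proof -
    obtain i j where ij: "(f ^^ i) x = (f ^^ j) r" "(f ^^ i) x \<noteq> base"
      using meets_root[OF x] unfolding orbits_meet_def by blast
    have "j = 0"
    proof (rule ccontr)
      assume "j \<noteq> 0"
      then obtain k where "j = Suc k" by (cases j) auto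
      then have "(f ^^ j) r = (f ^^ k) (f r)" by (simp only: funpow_Suc_right o_apply)
      with ij root(2) fixed show False by (simp add: funpow_fixed)
    qed
    with ij show ?thesis by auto
  qed
  have "reaching_root (M - {base}) f r"
  proof
    fix x assume x: "x \<in> M - {base}" "x \<noteq> r"
    then obtain n where n: "(f ^^ n) x = r" using reach by blast
    with x obtain k where "n = Suc k" by (cases n) auto
    with n have "(f ^^ k) (f x) = r" by (simp only: funpow_Suc_right o_apply)
    then have "f x \<noteq> base" using root fixed by (auto simp: funpow_fixed)
    with x closed show "f x \<in> M - {base}" by simp
  qed (use root reach in auto)
  then have "rooted_tree (M - {base}) (fgraph (M - {base}) f) r" by (rule reaching_root.rooted_tree)
  then show ?thesis by (auto simp: graph_type1_def induced_fgraph)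
qed

theorem fgraph_trichotomy:
  assumes closed: "\<And>x. x \<in> M \<Longrightarrow> f x \<in> M" and fixed: "f base = base"
    and meet: "\<And>x y. x \<in> M - {base} \<Longrightarrow> y \<in> M - {base} \<Longrightarrow> orbits_meet f base x y"
    and G: "finite G" "G \<subseteq> M - {base}" "\<And>x. x \<in> M - {base} \<Longrightarrow> \<exists>g\<in>G. \<exists>j. x = (f ^^ j) g"
    and nonempty: "M - {base} \<noteq> {}"
  shows "graph_type1 (M - {base}) (fgraph (M - {base}) f) \<or>
    graph_type2 (M - {base}) (fgraph (M - {base}) f) \<or>
    graph_type3 (M - {base}) (fgraph (M - {base}) f)"
proof (cases "\<exists>r \<in> M - {base}. f r = base")
  case True
  then show ?thesis using graph_type1_fgraph[where f = f, OF closed fixed] meet by blast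
next
  case False
  then have maps_to: "\<And>x. x \<in> M - {base} \<Longrightarrow> f x \<in> M - {base}" using closed by blast
  have meet': "\<exists>i j. (f ^^ i) x = (f ^^ j) y" if "x \<in> M - {base}" "y \<in> M - {base}" for x y
    using meet[OF that] unfolding orbits_meet_def by blast
  show ?thesis
  proof (cases "\<exists>x \<in> M - {base}. \<exists>p > 0. (f ^^ p) x = x")
    case True
    then show ?thesis using graph_type3_fgraph[where f = f, OF maps_to meet'] by blast
  next
    case False
    then show ?thesis using graph_type2_fgraph[where f = f, OF maps_to meet' _ G nonempty] by blast
  qed
qed

section \<open>Modules over \<open>\<langle>t\<rangle>\<close>\<close>

lemma tmodule_act_closed: "tmodule M base act \<Longrightarrow> m \<in> M \<Longrightarrow> act a m \<in> M"
  unfolding tmodule_def by blast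

lemma tmodule_act_base:
  assumes "tmodule M base act"
  shows "act a base = base"
proof -
  from assms have base: "base \<in> M" and none: "\<And>m. m \<in> M \<Longrightarrow> act None m = base"
    and comp: "\<And>a b m. m \<in> M \<Longrightarrow> act a (act b m) = act (tmul a b) m"
    unfolding tmodule_def by auto
  have "act a base = act a (act None base)" using none base by simp
  also have "\<dots> = act (tmul a None) base" using comp base by simp
  also have "tmul a None = None" by (cases a) simp_all
  also have "act None base = base" using none base by simp
  finally show ?thesis .
qed

lemma tmodule_act_Some_funpow:
  assumes "tmodule M base act" "m \<in> M"
  shows "act (Some j) m = (act (Some 1) ^^ j) m"
proof (induction j)
  case 0
  with assms show ?case by (simp add: tmodule_def)
next
  case (Suc j)
  have "act (Some (Suc j)) m = act (Some 1) (act (Some j) m)"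
    using assms by (simp add: tmodule_def)
  with Suc show ?case by simp
qed

lemma tmodule_funpow_closed: "tmodule M base act \<Longrightarrow> m \<in> M \<Longrightarrow> (act (Some 1) ^^ j) m \<in> M"
  by (metis tmodule_act_Some_funpow tmodule_act_closed)

lemma gedges_eq_fgraph:
  "tmodule M base act \<Longrightarrow> gedges M base act = fgraph (M - {base}) (act (Some 1))"
  unfolding gedges_def fgraph_def by (auto dest: tmodule_act_closed)

lemma submoduleI_funpow:
  assumes "tmodule M base act" "base \<in> N" "N \<subseteq> M"
    and "\<And>m j. m \<in> N \<Longrightarrow> (act (Some 1) ^^ j) m \<in> N"
  shows "submodule N M base act"
  unfolding submodule_def
proof (intro conjI allI ballI)
  fix a m assume "m \<in> N"
  with assms show "act a m \<in> N"
    by (cases a) (auto simp: tmodule_act_Some_funpow tmodule_def)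
qed (use assms in auto)

lemma decomposableI_saturated:
  assumes mod: "tmodule M base act" and S: "S \<subseteq> M - {base}" "S \<noteq> {}" "M - {base} - S \<noteq> {}"
    and saturated: "\<And>m j. m \<in> M \<Longrightarrow> (act (Some 1) ^^ j) m \<noteq> base \<Longrightarrow>
      (act (Some 1) ^^ j) m \<in> S \<longleftrightarrow> m \<in> S"
  shows "decomposable M base act"
proof -
  let ?f = "act (Some 1)"
  have base: "base \<in> M" using mod by (simp add: tmodule_def)
  have fixed: "(?f ^^ j) base = base" for j
    using tmodule_act_base[OF mod] by (rule funpow_fixed)
  have "submodule (insert base S) M base act"
  proof (rule submoduleI_funpow[OF mod])
    fix m j assume m: "m \<in> insert base S"
    show "(?f ^^ j) m \<in> insert base S"
    proof (cases "(?f ^^ j) m = base")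
      case False
      with m fixed have "m \<in> S" by auto
      with False saturated[of m j] S(1) show ?thesis by auto
    qed simp
  qed (use S(1) base in auto)
  moreover have "submodule (M - S) M base act"
  proof (rule submoduleI_funpow[OF mod])
    fix m j assume m: "m \<in> M - S"
    show "(?f ^^ j) m \<in> M - S"
    proof (cases "(?f ^^ j) m = base")
      case True
      with base S(1) show ?thesis by auto
    next
      case False
      with m saturated[of m j] tmodule_funpow_closed[OF mod, of m j] show ?thesis by auto
    qed
  qed (use S(1) base in auto)
  moreover have "insert base S \<union> (M - S) = M" "insert base S \<inter> (M - S) = {base}"
    using S(1) base by auto
  moreover have "nontrivial (insert base S) base" "nontrivial (M - S) base"
    using S unfolding nontrivial_def by auto
  ultimately show ?thesis unfolding decomposable_def by blast
qed

lemma indecomposable_orbits_meet: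
  assumes mod: "tmodule M base act" and "indecomposable M base act"
    and "x \<in> M - {base}" "y \<in> M - {base}"
  shows "orbits_meet (act (Some 1)) base x y"
proof (rule ccontr)
  let ?f = "act (Some 1)"
  assume "\<not> orbits_meet ?f base x y"
  define S where "S = {z \<in> M - {base}. orbits_meet ?f base x z}"
  have xS: "x \<in> S" using \<open>x \<in> M - {base}\<close> by (auto simp: S_def orbits_meet_def intro!: exI[of _ 0])
  have yS: "y \<in> M - {base} - S" using \<open>y \<in> M - {base}\<close> \<open>\<not> orbits_meet ?f base x y\<close>
    by (simp add: S_def)
  have saturated: "(?f ^^ j) m \<in> S \<longleftrightarrow> m \<in> S"
    if "m \<in> M" "(?f ^^ j) m \<noteq> base" for m j
  proof -
    have "m \<noteq> base" using that(2) mod by (auto simp: funpow_fixed tmodule_act_base)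
    then show ?thesis
      using that orbits_meet_funpow_iff[OF that(2)] tmodule_funpow_closed[OF mod]
      by (simp add: S_def)
  qed
  have "decomposable M base act"
  proof (rule decomposableI_saturated[OF mod])
    show "S \<subseteq> M - {base}" by (auto simp: S_def)
  qed (use xS yS saturated in auto)
  with assms show False by (simp add: indecomposable_def)
qed

lemma fin_gen_funpow:
  assumes mod: "tmodule M base act" and "fin_gen M base act"
  obtains G where "finite G" "G \<subseteq> M - {base}"
    "\<And>m. m \<in> M - {base} \<Longrightarrow> \<exists>g\<in>G. \<exists>j. m = (act (Some 1) ^^ j) g"
proof -
  obtain gs where gs: "set gs \<subseteq> M" "\<And>m. m \<in> M \<Longrightarrow> m = base \<or> (\<exists>g\<in>set gs. \<exists>j. m = act (Some j) g)"
    using assms(2) unfolding fin_gen_def by blast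
  show ?thesis
  proof (rule that[of "set gs - {base}"])
    show "finite (set gs - {base})" "set gs - {base} \<subseteq> M - {base}" using gs(1) by auto
    fix m assume m: "m \<in> M - {base}"
    then obtain g j where g: "g \<in> set gs" "m = (act (Some 1) ^^ j) g"
      using gs tmodule_act_Some_funpow[OF mod] by blast
    moreover have "g \<noteq> base" using m g(2) mod by (auto simp: funpow_fixed tmodule_act_base)
    ultimately show "\<exists>g\<in>set gs - {base}. \<exists>j. m = (act (Some 1) ^^ j) g" by blast
  qed
qed

theorem mainTheorem9:
  fixes M :: "'a set" and base :: 'a and act :: "tmon \<Rightarrow> 'a \<Rightarrow> 'a"
  assumes "tmodule M base act"
    and "nontrivial M base"
    and "fin_gen M base act"
    and "indecomposable M base act"
  shows "graph_type1 (gverts M base) (gedges M base act) \<or>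
         graph_type2 (gverts M base) (gedges M base act) \<or>
         graph_type3 (gverts M base) (gedges M base act)"
proof -
  obtain G where G: "finite G" "G \<subseteq> M - {base}"
    "\<And>m. m \<in> M - {base} \<Longrightarrow> \<exists>g\<in>G. \<exists>j. m = (act (Some 1) ^^ j) g"
    using fin_gen_funpow[OF assms(1,3)] by blast
  have "M - {base} \<noteq> {}"
    using assms(1,2) by (auto simp: nontrivial_def tmodule_def)
  then have "graph_type1 (M - {base}) (fgraph (M - {base}) (act (Some 1))) \<or>
    graph_type2 (M - {base}) (fgraph (M - {base}) (act (Some 1))) \<or>
    graph_type3 (M - {base}) (fgraph (M - {base}) (act (Some 1)))"
    using fgraph_trichotomy[where f = "act (Some 1)", OF tmodule_act_closed[OF assms(1)]
        tmodule_act_base[OF assms(1)] indecomposable_orbits_meet[OF assms(1,4)] G]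
    by blast
  then show ?thesis
    using assms(1) by (simp add: gverts_def gedges_eq_fgraph)
qed

end
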